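(* Let $r\ge1$ and $\mu\in\mathcal P_r$. (i) If $\mu\in\mathcal P_s$ for some $s>r$, then $\lim_{n\to\infty}n^{1/r-1/s}d_r(\delta^{\mathbf u_n}_\bullet,\mu)=0$. (ii) If ${\rm supp}\,\mu$ is bounded, then $\limsup_{n\to\infty}n^{1/r}d_r(\delta^{\mathbf u_n}_\bullet,\mu)<+\infty$.
   Context: $\mathcal P$ denotes the set of Borel probability measures on $\mathbb R$; $\mathcal P_r=\{\mu\in\mathcal P:\int|x|^r{\rm d}\mu(x)<\infty\}$. For $\mu\in\mathcal P$, $F_\mu(x)=\mu(]-\infty,x])$ and $F_\mu^{-1}(t)=\sup\{x: F_\mu(x)\le t\}$, $t\in]0,1[$. $d_r(\mu,\nu)=\big(\int_0^1|F_\mu^{-1}(t)-F_\nu^{-1}(t)|^r{\rm d}t\big)^{1/r}$ on $\mathcal P_r$. With $\Xi_n=\{\mathbf x\in\mathbb R^n:x_1\le\dots\le x_n\}$ and $\delta^{\mathbf u_n}_{\mathbf x}=\frac1n\sum_{i=1}^n\delta_{x_i}$, set $d_r(\delta^{\mathbf u_n}_\bullet,\mu)=\min_{\mathbf x\in\Xi_n}d_r(\delta^{\mathbf u_n}_{\mathbf x},\mu)$ (the minimum is attained). *)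

theory Defs
  imports "HOL-Probability.Probability"
begin

definition cdf_of :: "real measure \<Rightarrow> real \<Rightarrow> real" where
  "cdf_of M x = measure M {..x}"

text \<open>Quantile function F_mu^{-1}(t) = sup {x. F_mu(x) \<le> t}, used for t in ]0,1[.\<close>
definition quantile_of :: "real measure \<Rightarrow> real \<Rightarrow> real" where
  "quantile_of M t = Sup {x. cdf_of M x \<le> t}"

definition has_moment :: "real \<Rightarrow> real measure \<Rightarrow> bool" where
  "has_moment r M \<longleftrightarrow> integrable M (\<lambda>x. \<bar>x\<bar> powr r)"

definition wdist :: "real \<Rightarrow> real measure \<Rightarrow> real measure \<Rightarrow> real" where
  "wdist r M N = (LINT t:{0<..<1}|lborel. \<bar>quantile_of M t - quantile_of N t\<bar> powr r) powr (1/r)"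

text \<open>Uniform empirical measure (1/n) sum_{i<n} delta_{x_i} as a Borel measure (n \<ge> 1).\<close>
definition emp_measure :: "nat \<Rightarrow> (nat \<Rightarrow> real) \<Rightarrow> real measure" where
  "emp_measure n x = distr (measure_pmf (pmf_of_set {..<n})) borel x"

text \<open>Xi_n: nondecreasing n-tuples (entries indexed 0..n-1; other values irrelevant).\<close>
definition Xi :: "nat \<Rightarrow> (nat \<Rightarrow> real) set" where
  "Xi n = {x. \<forall>i j. i \<le> j \<longrightarrow> j < n \<longrightarrow> x i \<le> x j}"

text \<open>d_r(delta^{u_n}_bullet, mu) = min over Xi_n (the minimum is attained, so Inf = min).\<close>
definition opt_wdist :: "real \<Rightarrow> nat \<Rightarrow> real measure \<Rightarrow> real" where
  "opt_wdist r n M = Inf ((\<lambda>x. wdist r (emp_measure n x) M) ` Xi n)"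

definition supp_of :: "real measure \<Rightarrow> real set" where
  "supp_of M = {x. \<forall>e>0. measure M (ball x e) > 0}"

end

theory Submission
  imports Defs
begin

(*
  Let q be the quantile function of M and m = q(1/2). Under the uniform law on ]0,1[ the
  quantile function of a measure has that measure as its law, and for a nondecreasing tuple x
  the quantile function of the empirical measure is the staircase t \<mapsto> x (\<lfloor>n t\<rfloor>).
  Take x k = g (k/n), where g is q clamped to [1/n, 1 - 1/n]. Then |x (\<lfloor>n t\<rfloor>) - q t| is at
  most the staircase error of the bounded monotone g, whose r-th power integrates to at most
  (g 1 - g 0)\<^sup>r / n because the increments g t - g (t - 1/n) telescope, plus the clamping error,
  which lives on the tails T\<^sub>n = ]0,1/n[ \<union> ]1-1/n,1[. Both are controlled by the tail moment
  \<integral>\<^bsub>T\<^sub>n\<^esub> |q - m|\<^sup>r, so d\<^sub>r(\<delta>\<^sub>\<bullet>, M)\<^sup>r \<le> C\<^sub>r \<integral>\<^bsub>T\<^sub>n\<^esub> |q - m|\<^sup>r.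

  For (i), truncating |q - m| at the level where its s-th power equals n \<integral>\<^bsub>T\<^sub>n\<^esub> |q - m|\<^sup>s + 1
  gives n\<^bsup>1-r/s\<^esup> \<integral>\<^bsub>T\<^sub>n\<^esub> |q - m|\<^sup>r \<le> 3 (\<integral>\<^bsub>T\<^sub>n\<^esub> |q - m|\<^sup>s + 1/n)\<^bsup>r/s\<^esup>, which tends to 0 since T\<^sub>n
  shrinks to the empty set. For (ii), q takes values in the bounded support, so the tail
  moment is O(1/n).
*)

section \<open>Elementary inequalities\<close>

lemma abs_diff_powr_le:
  fixes u v r :: real
  assumes "0 \<le> r"
  shows "\<bar>u - v\<bar> powr r \<le> 2 powr r * (\<bar>u\<bar> powr r + \<bar>v\<bar> powr r)"
proof -
  have "\<bar>u - v\<bar> powr r \<le> (2 * max \<bar>u\<bar> \<bar>v\<bar>) powr r"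
    using assms by (intro powr_mono2) auto
  also have "\<dots> = 2 powr r * max \<bar>u\<bar> \<bar>v\<bar> powr r"
    by (simp add: powr_mult)
  also have "max \<bar>u\<bar> \<bar>v\<bar> powr r \<le> \<bar>u\<bar> powr r + \<bar>v\<bar> powr r"
    by (cases "\<bar>u\<bar> \<le> \<bar>v\<bar>") (auto simp: max_def)
  finally show ?thesis by simp
qed

lemma powr_pred_mult: "0 \<le> x \<Longrightarrow> x powr (r - 1) * x = x powr r"
  for x r :: real
  using powr_add[of x "r - 1" 1] by simp

lemma powr_le_powr_pred_mult:
  fixes d D e r :: real
  assumes "1 \<le> r" "0 \<le> d" "d \<le> D" "d \<le> e"
  shows "d powr r \<le> D powr (r - 1) * e"
proof (cases "d = 0")
  case False
  have "d powr r = d powr (r - 1) * d"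
    using assms by (simp add: powr_pred_mult)
  also have "\<dots> \<le> D powr (r - 1) * e"
    using assms by (intro mult_mono powr_mono2) auto
  finally show ?thesis .
qed (use assms in simp)

lemma powr_le_truncation:
  fixes y K r s :: real
  assumes "0 \<le> y" "0 < K" "0 < r" "r < s"
  shows "y powr r \<le> K powr r + K powr (r - s) * y powr s"
proof (cases "y \<le> K")
  case True
  then have "y powr r \<le> K powr r"
    using assms by (intro powr_mono2) auto
  then show ?thesis by (simp add: add_increasing2)
next
  case False
  have "y powr r = y powr (r - s) * y powr s"
    using assms False by (simp flip: powr_add)
  also have "\<dots> \<le> K powr (r - s) * y powr s"
    using assms False by (intro mult_right_mono powr_mono2') auto
  finally show ?thesis by (simp add: add_increasing)
qed

lemma powr_inverse_mult_eq:
  fixes a b r :: real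
  assumes "0 \<le> a" "0 \<le> b" "0 < r"
  shows "a powr (1/r) * b = (a * b powr r) powr (1/r)"
  using assms by (simp add: powr_mult powr_powr)

section \<open>Set integrals on the line\<close>

lemma set_integrable_bounded:
  fixes f :: "'a \<Rightarrow> real"
  assumes [measurable]: "f \<in> borel_measurable M" "A \<in> sets M"
    and "emeasure M A < \<infinity>" and "\<And>x. x \<in> A \<Longrightarrow> \<bar>f x\<bar> \<le> C"
  shows "set_integrable M A f"
  unfolding set_integrable_def
  by (rule integrableI_bounded_set_indicator[where B=C]) (use assms in auto)

lemma set_integral_mono':
  fixes f g :: "'a \<Rightarrow> real"
  assumes "set_integrable M A f" "\<And>x. x \<in> A \<Longrightarrow> g x \<le> f x" "\<And>x. x \<in> A \<Longrightarrow> 0 \<le> f x"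
  shows "(LINT x:A|M. g x) \<le> (LINT x:A|M. f x)"
  using assms unfolding set_integrable_def set_lebesgue_integral_def
  by (intro integral_mono') (auto simp: indicator_def)

lemma set_integral_le_measure_mult:
  fixes f :: "'a \<Rightarrow> real"
  assumes "set_integrable M A f" "A \<in> sets M" "emeasure M A < \<infinity>" "\<And>x. x \<in> A \<Longrightarrow> f x \<le> c"
  shows "(LINT x:A|M. f x) \<le> measure M A * c"
proof -
  have "(LINT x:A|M. f x) \<le> (LINT x:A|M. c)"
    by (rule set_integral_mono[OF assms(1) set_integrable_bounded[where C="\<bar>c\<bar>"]]) (use assms in auto)
  then show ?thesis
    using assms(2,3) by (simp add: set_integral_const)
qed

lemma measure_mult_le_set_integral:
  fixes f :: "'a \<Rightarrow> real"
  assumes "set_integrable M A f" "A \<in> sets M" "emeasure M A < \<infinity>" "\<And>x. x \<in> A \<Longrightarrow> c \<le> f x"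
  shows "measure M A * c \<le> (LINT x:A|M. f x)"
proof -
  have "(LINT x:A|M. c) \<le> (LINT x:A|M. f x)"
    by (rule set_integral_mono[OF set_integrable_bounded[where C="\<bar>c\<bar>"] assms(1)]) (use assms in auto)
  then show ?thesis
    using assms(2,3) by (simp add: set_integral_const)
qed

lemma set_integral_indicator_subset:
  fixes f :: "'a \<Rightarrow> real"
  assumes "B \<subseteq> A"
  shows "(LINT x:A|M. indicator B x * f x) = (LINT x:B|M. f x)"
    and "set_integrable M A (\<lambda>x. indicator B x * f x) \<longleftrightarrow> set_integrable M B f"
proof -
  have "(\<lambda>x. indicator A x * (indicator B x * f x)) = (\<lambda>x. indicator B x * f x)"
    using assms by (intro ext) (auto simp: indicator_def)
  then show "(LINT x:A|M. indicator B x * f x) = (LINT x:B|M. f x)"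
    "set_integrable M A (\<lambda>x. indicator B x * f x) \<longleftrightarrow> set_integrable M B f"
    unfolding set_lebesgue_integral_def set_integrable_def by simp_all
qed

lemma set_integral_Ioo_shift:
  fixes f :: "real \<Rightarrow> real"
  shows "(LINT t:{u<..<v}|lborel. f (t - h)) = (LINT t:{u-h<..<v-h}|lborel. f t)"
proof -
  have "(LINT t:{u-h<..<v-h}|lborel. f t)
      = integral\<^sup>L lborel (\<lambda>t. indicator {u-h<..<v-h} (- h + 1 * t) * f (- h + 1 * t))"
    using lborel_integral_real_affine[where c=1 and t="- h" and f="\<lambda>t. indicator {u-h<..<v-h} t * f t"]
    by (simp add: set_lebesgue_integral_def)
  also have "\<dots> = (LINT t:{u<..<v}|lborel. f (t - h))"
    by (auto simp: set_lebesgue_integral_def indicator_def intro!: Bochner_Integration.integral_cong)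
  finally show ?thesis by simp
qed

lemma set_integral_shift_difference_le:
  fixes g :: "real \<Rightarrow> real"
  assumes g: "mono g" "\<And>t. a \<le> g t" "\<And>t. g t \<le> b" and h: "0 < h" "h < 1"
  shows "(LINT t:{0<..<1}|lborel. g t - g (t - h)) \<le> (b - a) * h"
proof -
  have [measurable]: "g \<in> borel_measurable borel"
    by (rule borel_measurable_mono[OF g(1)])
  have bd: "\<bar>g t\<bar> \<le> \<bar>a\<bar> + \<bar>b\<bar>" for t
    using g(2,3)[of t] by linarith
  have int: "set_integrable lborel S g" if "S \<in> sets borel" "emeasure lborel S < \<infinity>" for S
    by (rule set_integrable_bounded[OF _ _ _ bd]) (use that in auto)
  have int_shift: "set_integrable lborel {0<..<1} (\<lambda>t. g (t - h))"
    by (rule set_integrable_bounded[OF _ _ _ bd]) auto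
  have "{0<..<1} = {0<..<1-h} \<union> {1-h..<1::real}" "{-h<..<1-h} = {-h<..0} \<union> {0<..<1-h::real}"
    using h by auto
  then have "(LINT t:{0<..<1}|lborel. g t) = (LINT t:{0<..<1-h}|lborel. g t) + (LINT t:{1-h..<1}|lborel. g t)"
    "(LINT t:{-h<..<1-h}|lborel. g t) = (LINT t:{-h<..0}|lborel. g t) + (LINT t:{0<..<1-h}|lborel. g t)"
    by (simp_all only:) (rule set_integral_Un; use h in \<open>auto intro: int\<close>)+
  moreover have "(LINT t:{1-h..<1}|lborel. g t) \<le> measure lborel {1-h..<1} * b"
    by (rule set_integral_le_measure_mult) (use g h in \<open>auto intro: int\<close>)
  moreover have "measure lborel {-h<..0} * a \<le> (LINT t:{-h<..0}|lborel. g t)"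
    by (rule measure_mult_le_set_integral) (use g h in \<open>auto intro: int\<close>)
  ultimately show ?thesis
    using h by (simp add: set_integral_Ioo_shift int int_shift algebra_simps)
qed

lemma set_integral_staircase_error_le:
  fixes g :: "real \<Rightarrow> real" and n :: nat
  assumes g: "mono g" "\<And>t. a \<le> g t" "\<And>t. g t \<le> b" and "1 \<le> r" "1 < n"
  shows "set_integrable lborel {0<..<1} (\<lambda>t. \<bar>g t - g (real (nat \<lfloor>t * n\<rfloor>) / n)\<bar> powr r)"
    and "(LINT t:{0<..<1}|lborel. \<bar>g t - g (real (nat \<lfloor>t * n\<rfloor>) / n)\<bar> powr r) \<le> (b - a) powr r / n"
proof -
  let ?e = "\<lambda>t. \<bar>g t - g (real (nat \<lfloor>t * n\<rfloor>) / n)\<bar> powr r"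
  have [measurable]: "g \<in> borel_measurable borel"
    by (rule borel_measurable_mono[OF g(1)])
  have bd: "\<bar>g t\<bar> \<le> \<bar>a\<bar> + \<bar>b\<bar>" for t
    using g(2,3)[of t] by linarith
  have npos: "0 < real n" using assms by simp
  have e_le: "?e t \<le> (b - a) powr (r - 1) * (g t - g (t - 1 / n))" "\<bar>?e t\<bar> \<le> (b - a) powr r"
    if "t \<in> {0<..<1}" for t
  proof -
    let ?k = "real (nat \<lfloor>t * n\<rfloor>)"
    have "?k = of_int \<lfloor>t * n\<rfloor>"
      using that npos by simp
    then have "?k \<le> t * n" "t * n - 1 \<le> ?k"
      by linarith+
    moreover have "t - 1 / n = (t * n - 1) / n"
      using npos by (simp add: field_simps)
    ultimately have "?k / n \<le> t" "t - 1 / n \<le> ?k / n"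
      using npos by (simp_all add: divide_le_eq divide_right_mono)
    then have "0 \<le> g t - g (?k / n)" "g t - g (?k / n) \<le> g t - g (t - 1 / n)"
      using g(1) by (auto dest: monoD)
    moreover have "g t - g (?k / n) \<le> b - a"
      using g(2)[of "?k / n"] g(3)[of t] by linarith
    ultimately show "?e t \<le> (b - a) powr (r - 1) * (g t - g (t - 1 / n))" "\<bar>?e t\<bar> \<le> (b - a) powr r"
      using assms by (auto intro!: powr_le_powr_pred_mult powr_mono2)
  qed
  show int: "set_integrable lborel {0<..<1} ?e"
    by (rule set_integrable_bounded[OF _ _ _ e_le(2)]) auto
  have "(LINT t:{0<..<1}|lborel. ?e t) \<le> (LINT t:{0<..<1}|lborel. (b - a) powr (r - 1) * (g t - g (t - 1 / n)))"
    by (rule set_integral_mono[OF int _ e_le(1)])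
      (intro set_integrable_mult_right set_integral_diff(1) set_integrable_bounded[where C="\<bar>a\<bar> + \<bar>b\<bar>"];
        auto simp: bd)
  also have "\<dots> \<le> (b - a) powr (r - 1) * ((b - a) * (1 / n))"
    unfolding set_integral_mult_right
    by (intro mult_left_mono set_integral_shift_difference_le[OF g]) (use assms in auto)
  also have "\<dots> = (b - a) powr r / n"
    using g(2,3)[of 0] by (simp add: powr_pred_mult)
  finally show "(LINT t:{0<..<1}|lborel. ?e t) \<le> (b - a) powr r / n" .
qed

lemma set_integral_powr_le_higher_moment:
  fixes f :: "'a \<Rightarrow> real" and n :: nat
  assumes rs: "0 < r" "r < s" and "0 < n" "0 \<le> c"
    and A: "A \<in> sets M" "emeasure M A < \<infinity>" "measure M A \<le> c / n"
    and int_r: "set_integrable M A (\<lambda>x. \<bar>f x\<bar> powr r)"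
    and int_s: "set_integrable M A (\<lambda>x. \<bar>f x\<bar> powr s)"
  shows "n powr (1 - r/s) * (LINT x:A|M. \<bar>f x\<bar> powr r)
      \<le> (c + 1) * ((LINT x:A|M. \<bar>f x\<bar> powr s) + 1 / n) powr (r/s)"
proof -
  define \<alpha> where "\<alpha> = (LINT x:A|M. \<bar>f x\<bar> powr s)"
  define w where "w = \<alpha> + 1 / n"
  have npos: "0 < real n" using assms by simp
  have "0 \<le> \<alpha>"
    unfolding \<alpha>_def set_lebesgue_integral_def by (intro Bochner_Integration.integral_nonneg) (simp split: split_indicator)
  then have w: "0 < w" "\<alpha> \<le> w" using npos by (simp_all add: w_def add_nonneg_pos)
  \<comment> \<open>below the level \<open>K\<close> bound \<open>|f|\<^sup>r\<close> by \<open>K\<^sup>r\<close>, above it by the \<open>s\<close>-th moment\<close>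
  define K where "K = (w * n) powr (1 / s)"
  have K: "0 < K" "K powr r = (w * n) powr (r / s)" "K powr (r - s) = (w * n) powr (r / s) / (w * n)"
    using w npos rs by (auto simp: K_def powr_powr powr_diff divide_simps)
  have const: "set_integrable M A (\<lambda>_. K powr r)"
    using A by (simp add: set_integrable_def)
  have "\<bar>f x\<bar> powr r \<le> K powr r + K powr (r - s) * \<bar>f x\<bar> powr s" for x
    by (rule powr_le_truncation) (use K rs in auto)
  then have "(LINT x:A|M. \<bar>f x\<bar> powr r) \<le> (LINT x:A|M. K powr r + K powr (r - s) * \<bar>f x\<bar> powr s)"
    by (intro set_integral_mono int_r set_integral_add(1) set_integrable_mult_right const int_s)
  also have "\<dots> = measure M A * K powr r + K powr (r - s) * \<alpha>"
    using A int_s const by (simp add: \<alpha>_def set_integral_const less_top)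
  also have "\<dots> \<le> c / n * K powr r + K powr (r - s) * w"
    using A w by (intro add_mono mult_right_mono mult_left_mono) auto
  also have "\<dots> = (w * n) powr (r / s) * (c + 1) / n"
    using w npos by (simp add: K field_simps)
  finally have "n powr (1 - r/s) * (LINT x:A|M. \<bar>f x\<bar> powr r)
      \<le> n powr (1 - r/s) * ((w * n) powr (r / s) * (c + 1) / n)"
    by (intro mult_left_mono) auto
  also have "\<dots> = (c + 1) * w powr (r / s)"
    using w npos by (simp add: powr_mult powr_diff field_simps)
  finally show ?thesis unfolding w_def \<alpha>_def .
qed

section \<open>Empirical measures\<close>

lemma cdf_of_emp_measure:
  assumes "n \<ge> 1"
  shows "cdf_of (emp_measure n x) y = card {i\<in>{..<n}. x i \<le> y} / n"
proof -
  have ne: "{..<n} \<noteq> {}" using assms by (simp add: lessThan_empty_iff)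
  have "cdf_of (emp_measure n x) y = measure (measure_pmf (pmf_of_set {..<n})) (x -` {..y})"
    unfolding cdf_of_def emp_measure_def by (simp add: measure_distr)
  also have "\<dots> = card ({..<n} \<inter> x -` {..y}) / card {..<n}"
    using ne by (simp add: measure_pmf_of_set)
  also have "{..<n} \<inter> x -` {..y} = {i\<in>{..<n}. x i \<le> y}" by auto
  finally show ?thesis by simp
qed

lemma card_le_iff_less_Xi:
  assumes x: "x \<in> Xi n" and "k < n"
  shows "card {i\<in>{..<n}. x i \<le> y} \<le> k \<longleftrightarrow> y < x k"
proof
  assume "y < x k"
  moreover have "x k \<le> x i" if "k \<le> i" "i < n" for i
    using x that by (simp add: Xi_def)
  ultimately have "{i\<in>{..<n}. x i \<le> y} \<subseteq> {..<k}"
    by (force simp flip: not_le)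
  then show "card {i\<in>{..<n}. x i \<le> y} \<le> k"
    using card_mono[of "{..<k}"] by fastforce
next
  assume "card {i\<in>{..<n}. x i \<le> y} \<le> k"
  moreover have "{..k} \<subseteq> {i\<in>{..<n}. x i \<le> y}" if "x k \<le> y"
    using x \<open>k < n\<close> that unfolding Xi_def by (auto intro: order_trans)
  ultimately show "y < x k"
    using card_mono[of "{i\<in>{..<n}. x i \<le> y}" "{..k}"] by fastforce
qed

lemma quantile_of_emp_measure:
  assumes "n \<ge> 1" "x \<in> Xi n" "0 < t" "t < 1"
  shows "quantile_of (emp_measure n x) t = x (nat \<lfloor>t * n\<rfloor>)"
proof -
  let ?k = "nat \<lfloor>t * n\<rfloor>"
  have "t * n < n" using assms by simp
  then have k: "?k < n" using assms by linarith
  have "cdf_of (emp_measure n x) y \<le> t \<longleftrightarrow> y < x ?k" for y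
  proof -
    let ?c = "card {i\<in>{..<n}. x i \<le> y}"
    have "cdf_of (emp_measure n x) y \<le> t \<longleftrightarrow> real ?c \<le> t * n"
      using assms by (simp add: cdf_of_emp_measure divide_le_eq)
    also have "\<dots> \<longleftrightarrow> ?c \<le> ?k"
      using assms by (simp add: le_floor_iff le_nat_iff)
    also have "\<dots> \<longleftrightarrow> y < x ?k"
      by (rule card_le_iff_less_Xi[OF assms(2) k])
    finally show ?thesis .
  qed
  then have "{y. cdf_of (emp_measure n x) y \<le> t} = {..< x ?k}" by auto
  then show ?thesis unfolding quantile_of_def by simp
qed

lemma wdist_powr:
  assumes "0 < r"
  shows "wdist r N M powr r = (LINT t:{0<..<1}|lborel. \<bar>quantile_of N t - quantile_of M t\<bar> powr r)"
proof -
  have "0 \<le> (LINT t:{0<..<1}|lborel. \<bar>quantile_of N t - quantile_of M t\<bar> powr r)"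
    by (auto simp: set_lebesgue_integral_def intro!: Bochner_Integration.integral_nonneg)
  then show ?thesis
    using assms by (simp add: wdist_def powr_powr)
qed

lemma opt_wdist_le_wdist: "x \<in> Xi n \<Longrightarrow> opt_wdist r n M \<le> wdist r (emp_measure n x) M"
  unfolding opt_wdist_def by (rule cInf_lower) (auto intro!: bdd_belowI[of _ 0] simp: wdist_def)

lemma opt_wdist_nonneg: "0 \<le> opt_wdist r n M"
proof -
  have "(\<lambda>_. 0) \<in> Xi n" by (simp add: Xi_def)
  then show ?thesis
    unfolding opt_wdist_def by (intro cInf_greatest) (auto simp: wdist_def)
qed

section \<open>Quantile functions\<close>

lemma cdf_of_eq_cdf: "cdf_of M = cdf M"
  by (auto simp: cdf_of_def cdf_def)

context real_distribution
begin

lemma bdd_above_cdf_le: "t < 1 \<Longrightarrow> bdd_above {x. cdf M x \<le> t}"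
proof -
  assume "t < 1"
  from order_tendstoD(1)[OF cdf_lim_at_top_prob this]
  obtain y where "\<forall>z\<ge>y. t < cdf M z"
    by (auto simp: eventually_at_top_linorder)
  then show ?thesis
    by (intro bdd_aboveI[of _ y]) (meson linorder_not_le mem_Collect_eq order_less_imp_le)
qed

lemma cdf_le_nonempty: "0 < t \<Longrightarrow> {x. cdf M x \<le> t} \<noteq> {}"
proof -
  assume "0 < t"
  from order_tendstoD(2)[OF cdf_lim_at_bot this] obtain y where "cdf M y < t"
    by (metis eventually_happens' trivial_limit_at_bot_linorder)
  then show ?thesis by (blast intro: less_imp_le)
qed

lemma le_quantile_of: "t < 1 \<Longrightarrow> cdf M x \<le> t \<Longrightarrow> x \<le> quantile_of M t"
  unfolding quantile_of_def cdf_of_eq_cdf by (rule cSup_upper) (auto intro: bdd_above_cdf_le)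

lemma cdf_le_of_less_quantile: "0 < t \<Longrightarrow> x < quantile_of M t \<Longrightarrow> cdf M x \<le> t"
proof -
  assume "0 < t" "x < quantile_of M t"
  then obtain y where "cdf M y \<le> t" "x < y"
    unfolding quantile_of_def cdf_of_eq_cdf using less_cSupE[OF _ cdf_le_nonempty] by blast
  then show ?thesis using cdf_nondecreasing[of x y] by simp
qed

lemma less_cdf_of_quantile_less: "t < 1 \<Longrightarrow> quantile_of M t < x \<Longrightarrow> t < cdf M x"
  by (meson le_quantile_of not_less)

lemma quantile_of_mono: "0 < s \<Longrightarrow> s \<le> t \<Longrightarrow> t < 1 \<Longrightarrow> quantile_of M s \<le> quantile_of M t"
proof (rule ccontr)
  assume st: "0 < s" "s \<le> t" "t < 1" and "\<not> quantile_of M s \<le> quantile_of M t"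
  then obtain y where "quantile_of M t < y" "y < quantile_of M s"
    using dense[of "quantile_of M t"] by (meson not_le)
  with st cdf_le_of_less_quantile[of s y] less_cdf_of_quantile_less[of t y] show False
    by linarith
qed

lemma le_cdf_of_quantile_le: "0 < t \<Longrightarrow> t < 1 \<Longrightarrow> quantile_of M t \<le> x \<Longrightarrow> t \<le> cdf M x"
proof (rule ccontr)
  assume t: "0 < t" "t < 1" "quantile_of M t \<le> x" and "\<not> t \<le> cdf M x"
  then have "cdf M x < t" by simp
  from order_tendstoD(2)[OF cdf_is_right_cont[of x, unfolded continuous_within] this]
  obtain b where "x < b" "\<forall>y>x. y < b \<longrightarrow> cdf M y < t"
    by (auto simp: eventually_at_right_field)
  then have "cdf M ((x + b) / 2) < t" by simp
  from le_quantile_of[OF t(2) less_imp_le[OF this]] t(3) \<open>x < b\<close> show False by simp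
qed

lemma borel_measurable_quantile_of [measurable]:
  "quantile_of M \<in> borel_measurable (restrict_space borel {0<..<1})"
  by (intro borel_measurable_mono_on_fnc mono_onI) (auto intro: quantile_of_mono)

lemma measure_quantile_of_le: "measure lborel {t\<in>{0<..<1}. quantile_of M t \<le> x} = cdf M x"
proof -
  let ?S = "{t\<in>{0<..<1}. quantile_of M t \<le> x}"
  have F: "0 \<le> cdf M x" "cdf M x \<le> 1" by (auto simp: cdf_nonneg cdf_bounded_prob)
  have A: "t \<in> ?S" if "0 < t" "t < cdf M x" for t
    using that F cdf_le_of_less_quantile[of t x] by force
  have B: "t \<le> cdf M x" if "t \<in> ?S" for t
    using le_cdf_of_quantile_le[of t x] that by force
  show ?thesis
  proof (cases "cdf M x \<in> ?S")
    case True
    then have "?S = {0<..cdf M x}" using A B F by (force simp: less_le)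
    then show ?thesis using F by simp
  next
    case False
    then have "?S = {0<..<cdf M x}" using A B F by (force simp: less_le)
    then show ?thesis using F by simp
  qed
qed

lemma distr_quantile_of: "distr (restrict_space lborel {0<..<1}) borel (quantile_of M) = M"
proof (intro cdf_unique ext)
  let ?U = "restrict_space lborel {0<..<1} :: real measure"
  interpret U: prob_space ?U
    by (auto simp: emeasure_restrict_space space_restrict_space intro!: prob_spaceI)
  show "real_distribution (distr ?U borel (quantile_of M))" "real_distribution M"
    by (auto simp: real_distribution_axioms)
  fix x
  have "cdf (distr ?U borel (quantile_of M)) x = measure lborel {t\<in>{0<..<1}. quantile_of M t \<le> x}"
    by (subst cdf_def) (auto simp: measure_distr space_restrict_space measure_restrict_space
        intro!: arg_cong2[where f=measure])
  also have "\<dots> = cdf M x"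
    by (rule measure_quantile_of_le)
  finally show "cdf (distr ?U borel (quantile_of M)) x = cdf M x" .
qed

lemma set_integrable_quantile_of:
  fixes f :: "real \<Rightarrow> real"
  assumes [measurable]: "f \<in> borel_measurable borel" and "integrable M f"
  shows "set_integrable lborel {0<..<1} (\<lambda>t. f (quantile_of M t))"
proof -
  have q: "quantile_of M \<in> measurable (restrict_space lborel {0<..<1}) borel"
    by measurable
  have "integrable (restrict_space lborel {0<..<1}) (\<lambda>t. f (quantile_of M t))"
    using assms(2) integrable_distr_eq[OF q assms(1)] distr_quantile_of by simp
  then show ?thesis
    by (simp add: set_integrable_def integrable_restrict_space)
qed

lemma quantile_of_in_supp:
  assumes t: "0 < t" "t < 1"
  shows "quantile_of M t \<in> supp_of M"
  unfolding supp_of_def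
proof (intro CollectI allI impI)
  fix e :: real assume e: "e > 0"
  let ?z = "quantile_of M t"
  have "measure M {?z - e/2<..?z + e/2} = cdf M (?z + e/2) - cdf M (?z - e/2)"
    using e by (intro finite_borel_measure.cdf_diff_eq[OF finite_borel_measure_M, symmetric]) simp
  moreover have "measure M {?z - e/2<..?z + e/2} \<le> measure M (ball ?z e)"
    using e by (intro finite_measure_mono) (auto simp: dist_real_def)
  moreover have "t < cdf M (?z + e/2)" "cdf M (?z - e/2) \<le> t"
    using e t by (auto intro: less_cdf_of_quantile_less cdf_le_of_less_quantile)
  ultimately show "0 < measure M (ball ?z e)" by linarith
qed

lemma integrable_abs_diff_powr:
  assumes "has_moment p M" "0 \<le> p"
  shows "integrable M (\<lambda>x. \<bar>x - c\<bar> powr p)"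
proof (rule Bochner_Integration.integrable_bound)
  show "integrable M (\<lambda>x. 2 powr p * (\<bar>x\<bar> powr p + \<bar>c\<bar> powr p))"
    using assms(1) by (auto simp: has_moment_def)
  show "AE x in M. norm (\<bar>x - c\<bar> powr p) \<le> norm (2 powr p * (\<bar>x\<bar> powr p + \<bar>c\<bar> powr p))"
    using abs_diff_powr_le[OF assms(2)] by simp
qed auto

lemma set_integrable_quantile_of_abs_diff_powr:
  "has_moment p M \<Longrightarrow> 0 \<le> p \<Longrightarrow> set_integrable lborel {0<..<1} (\<lambda>t. \<bar>quantile_of M t - c\<bar> powr p)"
  by (rule set_integrable_quantile_of[where f="\<lambda>x. \<bar>x - c\<bar> powr p"]) (auto intro: integrable_abs_diff_powr)

end

section \<open>Tails and clamping\<close>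

definition quantile_tails :: "nat \<Rightarrow> real set" where
  "quantile_tails n = {0<..<1/n} \<union> {1 - 1/n<..<1}"

lemma sets_quantile_tails [measurable]: "quantile_tails n \<in> sets borel"
  by (simp add: quantile_tails_def)

text \<open>This holds for \<open>n = 0\<close> as well, since \<open>1 / 0 = 0\<close> makes \<open>quantile_tails 0\<close> empty.\<close>
lemma quantile_tails_subset: "quantile_tails n \<subseteq> {0<..<1}"
proof -
  have "1 / real n \<le> 1" by (cases n) auto
  then show ?thesis by (auto simp: quantile_tails_def)
qed

lemma emeasure_quantile_tails_finite: "emeasure lborel (quantile_tails n) < \<infinity>"
  using emeasure_mono[OF quantile_tails_subset, of lborel] ennreal_one_less_top
  by (simp del: ennreal_one_less_top) (blast intro: le_less_trans)

lemma measure_quantile_tails: "2 \<le> n \<Longrightarrow> measure lborel (quantile_tails n) = 2 / n"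
  unfolding quantile_tails_def by (subst measure_Union) (auto simp: field_simps)

lemma set_integral_quantile_tails_tendsto_0:
  fixes f :: "real \<Rightarrow> real"
  assumes "set_integrable lborel {0<..<1} f"
  shows "(\<lambda>n. LINT t:quantile_tails n|lborel. f t) \<longlonglongrightarrow> 0"
proof (rule LIMSEQ_imp_Suc)
  have "(\<Inter>i. quantile_tails (Suc i)) = {}"
  proof (intro equals0I)
    fix t assume t: "t \<in> (\<Inter>i. quantile_tails (Suc i))"
    then have "0 < min t (1 - t)"
      using quantile_tails_subset by fastforce
    then obtain i where "inverse (Suc i) < min t (1 - t)"
      using reals_Archimedean by blast
    with t show False
      by (auto simp: quantile_tails_def field_simps dest!: spec[of _ i])
  qed
  moreover have "quantile_tails (Suc j) \<subseteq> quantile_tails (Suc i)" if "i \<le> j" for i j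
  proof -
    have "1 / real (Suc j) \<le> 1 / real (Suc i)"
      using that by (intro divide_left_mono) auto
    then show ?thesis
      unfolding quantile_tails_def by (auto simp del: of_nat_Suc)
  qed
  then have "decseq (\<lambda>i. quantile_tails (Suc i))"
    by (simp add: decseq_def)
  ultimately show "(\<lambda>i. LINT t:quantile_tails (Suc i)|lborel. f t) \<longlonglongrightarrow> 0"
    using set_integral_cont_down[of "\<lambda>i. quantile_tails (Suc i)" lborel f]
      set_integrable_subset[OF assms _ quantile_tails_subset] by (simp add: set_lebesgue_integral_def)
qed

definition tail_moment :: "real \<Rightarrow> real measure \<Rightarrow> nat \<Rightarrow> real" where
  "tail_moment p M n = (LINT t:quantile_tails n|lborel. \<bar>quantile_of M t - quantile_of M (1/2)\<bar> powr p)"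

lemma tail_moment_nonneg: "0 \<le> tail_moment p M n"
  by (simp add: tail_moment_def set_lebesgue_integral_def)

definition clamped_quantile :: "real measure \<Rightarrow> nat \<Rightarrow> real \<Rightarrow> real" where
  "clamped_quantile M n t = quantile_of M (min (max t (1/n)) (1 - 1/n))"

context real_distribution
begin

lemma set_integrable_quantile_tail:
  assumes "has_moment p M" "0 \<le> p" "A \<subseteq> {0<..<1}" "A \<in> sets borel"
  shows "set_integrable lborel A (\<lambda>t. \<bar>quantile_of M t - quantile_of M (1/2)\<bar> powr p)"
  using set_integrable_subset[OF set_integrable_quantile_of_abs_diff_powr[OF assms(1,2)]] assms(3,4)
  by simp

lemma tail_moment_tendsto_0: "has_moment p M \<Longrightarrow> 0 \<le> p \<Longrightarrow> (\<lambda>n. tail_moment p M n) \<longlonglongrightarrow> 0"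
  unfolding tail_moment_def
  by (intro set_integral_quantile_tails_tendsto_0 set_integrable_quantile_of_abs_diff_powr)

lemma tail_moment_powr_le:
  assumes "0 < r" "r < s" "has_moment r M" "has_moment s M" "2 \<le> n"
  shows "n powr (1 - r/s) * tail_moment r M n \<le> 3 * (tail_moment s M n + 1/n) powr (r/s)"
proof -
  have "0 \<le> r" "0 \<le> s"
    using assms(1,2) by simp_all
  then show ?thesis
    using set_integral_powr_le_higher_moment[of r s n 2 "quantile_tails n" lborel] assms
      set_integrable_quantile_tail[OF assms(3) _ quantile_tails_subset sets_quantile_tails]
      set_integrable_quantile_tail[OF assms(4) _ quantile_tails_subset sets_quantile_tails]
      measure_quantile_tails[OF assms(5)] emeasure_quantile_tails_finite
    by (simp add: tail_moment_def)
qed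

lemma tail_moment_le_bounded_supp:
  assumes C: "\<And>x. x \<in> supp_of M \<Longrightarrow> \<bar>x\<bar> \<le> C" and "0 \<le> p" "has_moment p M" "2 \<le> n"
  shows "tail_moment p M n \<le> 2 / n * (2 * C) powr p"
proof -
  have "\<bar>quantile_of M t - quantile_of M (1/2)\<bar> powr p \<le> (2 * C) powr p" if "t \<in> quantile_tails n" for t
  proof -
    have "t \<in> {0<..<1}"
      using that quantile_tails_subset by blast
    then have "\<bar>quantile_of M t\<bar> \<le> C" "\<bar>quantile_of M (1/2)\<bar> \<le> C"
      by (auto intro!: C quantile_of_in_supp)
    then show ?thesis using assms(2) by (intro powr_mono2) auto
  qed
  then have "tail_moment p M n \<le> measure lborel (quantile_tails n) * (2 * C) powr p"
    unfolding tail_moment_def using quantile_tails_subset assms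
    by (intro set_integral_le_measure_mult set_integrable_quantile_tail emeasure_quantile_tails_finite) auto
  then show ?thesis
    by (simp add: measure_quantile_tails[OF assms(4)])
qed

lemma
  assumes "2 \<le> n"
  shows clamped_quantile_ge: "quantile_of M (1/n) \<le> clamped_quantile M n t"
    and clamped_quantile_le: "clamped_quantile M n t \<le> quantile_of M (1 - 1/n)"
    and mono_clamped_quantile: "mono (clamped_quantile M n)"
proof -
  have n: "0 < 1 / real n" "1 / real n \<le> 1 - 1 / n" "1 - 1 / real n < 1"
    using assms by (auto simp: field_simps)
  show "quantile_of M (1/n) \<le> clamped_quantile M n t" "clamped_quantile M n t \<le> quantile_of M (1 - 1/n)"
    unfolding clamped_quantile_def using n
    by (auto intro!: quantile_of_mono simp: less_max_iff_disj min_less_iff_disj)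
  show "mono (clamped_quantile M n)"
    unfolding clamped_quantile_def using n
    by (auto intro!: monoI quantile_of_mono simp: less_max_iff_disj min_less_iff_disj)
qed

lemma abs_quantile_minus_clamped_le:
  assumes "2 \<le> n" "t \<in> {0<..<1}"
  shows "\<bar>quantile_of M t - clamped_quantile M n t\<bar>
    \<le> indicator (quantile_tails n) t * \<bar>quantile_of M t - quantile_of M (1/2)\<bar>"
proof -
  have n: "0 < 1 / real n" "1 / real n \<le> 1/2" "1/2 \<le> 1 - 1 / real n" "1 - 1 / real n < 1"
    using assms(1) by (auto simp: field_simps)
  consider "t < 1 / n" | "1 - 1 / n < t" | "1 / n \<le> t" "t \<le> 1 - 1 / n"
    by linarith
  then show ?thesis
  proof cases
    case 1
    then have "quantile_of M t \<le> clamped_quantile M n t" "clamped_quantile M n t \<le> quantile_of M (1/2)"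
      using assms n by (auto simp: clamped_quantile_def intro!: quantile_of_mono)
    then show ?thesis using 1 assms by (simp add: quantile_tails_def)
  next
    case 2
    then have "clamped_quantile M n t \<le> quantile_of M t" "quantile_of M (1/2) \<le> clamped_quantile M n t"
      using assms n by (auto simp: clamped_quantile_def intro!: quantile_of_mono)
    then show ?thesis using 2 assms n by (simp add: quantile_tails_def)
  qed (simp add: clamped_quantile_def)
qed

lemma quantile_spread_powr_le:
  assumes "1 \<le> r" "2 \<le> n" "has_moment r M"
  shows "(quantile_of M (1 - 1/n) - quantile_of M (1/n)) powr r / n \<le> 2 powr r * tail_moment r M n"
proof -
  let ?q = "quantile_of M" and ?a = "quantile_of M (1/n)" and ?b = "quantile_of M (1 - 1/n)"
  let ?m = "quantile_of M (1/2)" and ?f = "\<lambda>t. \<bar>quantile_of M t - quantile_of M (1/2)\<bar> powr r"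
  have n: "0 < 1 / real n" "1 / real n \<le> 1/2" "1/2 \<le> 1 - 1 / real n" "1 - 1 / real n < 1"
    using assms by (auto simp: field_simps)
  then have am: "?a \<le> ?m" and mb: "?m \<le> ?b"
    by (auto intro: quantile_of_mono)
  have sub: "{0<..<1/real n} \<subseteq> {0<..<1}" "{1-1/real n<..<1} \<subseteq> {0<..<1}"
    using quantile_tails_subset[of n] by (auto simp: quantile_tails_def)
  have r: "0 \<le> r"
    using assms(1) by simp
  note int = set_integrable_quantile_tail[OF assms(3) r sub(1)] set_integrable_quantile_tail[OF assms(3) r sub(2)]
  have "(?m - ?a) powr r \<le> ?f t" if "t \<in> {0<..<1/real n}" for t
  proof -
    have "?q t \<le> ?a" using that n by (auto intro!: quantile_of_mono)
    then show ?thesis using am assms(1) by (auto intro!: powr_mono2)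
  qed
  then have lower: "(?m - ?a) powr r / n \<le> (LINT t:{0<..<1/n}|lborel. ?f t)"
    using measure_mult_le_set_integral[OF int(1)] assms(1) n by simp
  have "(?b - ?m) powr r \<le> ?f t" if "t \<in> {1-1/real n<..<1}" for t
  proof -
    have "?b \<le> ?q t" using that n by (auto intro!: quantile_of_mono)
    then show ?thesis using mb assms(1) by (auto intro!: powr_mono2)
  qed
  then have upper: "(?b - ?m) powr r / n \<le> (LINT t:{1-1/n<..<1}|lborel. ?f t)"
    using measure_mult_le_set_integral[OF int(2)] assms(1) n by simp
  have "(?b - ?a) powr r / n \<le> 2 powr r * ((?b - ?m) powr r + (?m - ?a) powr r) / n"
    using abs_diff_powr_le[of r "?b - ?m" "?a - ?m"] assms am mb by (simp add: divide_right_mono)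
  also have "\<dots> = 2 powr r * ((?m - ?a) powr r / n + (?b - ?m) powr r / n)"
    by (simp add: add_divide_distrib[symmetric] add.commute)
  also have "\<dots> \<le> 2 powr r * ((LINT t:{0<..<1/n}|lborel. ?f t) + (LINT t:{1-1/n<..<1}|lborel. ?f t))"
    using lower upper by (intro mult_left_mono add_mono) auto
  also have "\<dots> = 2 powr r * tail_moment r M n"
    unfolding tail_moment_def quantile_tails_def using n by (subst set_integral_Un) (auto intro!: int)
  finally show ?thesis .
qed

lemma clamped_staircase_error_powr_le:
  assumes "1 \<le> r" "2 \<le> n" "t \<in> {0<..<1}"
  defines "g \<equiv> clamped_quantile M n" and "k \<equiv> real (nat \<lfloor>t * n\<rfloor>)"
  shows "\<bar>g (k / n) - quantile_of M t\<bar> powr r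
    \<le> 2 powr r * (\<bar>g t - g (k / n)\<bar> powr r
      + indicator (quantile_tails n) t * \<bar>quantile_of M t - quantile_of M (1/2)\<bar> powr r)"
proof -
  have "\<bar>g (k / n) - quantile_of M t\<bar> powr r
      \<le> 2 powr r * (\<bar>g t - g (k / n)\<bar> powr r + \<bar>quantile_of M t - g t\<bar> powr r)"
    using abs_diff_powr_le[of r "g (k / n) - g t" "quantile_of M t - g t"] assms(1)
    by (simp add: abs_minus_commute)
  moreover have "\<bar>quantile_of M t - g t\<bar> powr r
      \<le> indicator (quantile_tails n) t * \<bar>quantile_of M t - quantile_of M (1/2)\<bar> powr r"
    using abs_quantile_minus_clamped_le[OF assms(2,3)] assms(1)
    by (cases "t \<in> quantile_tails n") (auto simp: g_def intro!: powr_mono2)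
  then have "2 powr r * (\<bar>g t - g (k / n)\<bar> powr r + \<bar>quantile_of M t - g t\<bar> powr r)
      \<le> 2 powr r * (\<bar>g t - g (k / n)\<bar> powr r
        + indicator (quantile_tails n) t * \<bar>quantile_of M t - quantile_of M (1/2)\<bar> powr r)"
    by (intro mult_left_mono add_left_mono) auto
  ultimately show ?thesis
    by (rule order_trans)
qed

end

section \<open>Rates\<close>

context real_distribution
begin

text \<open>The empirical measure on the points \<open>clamped_quantile M n (k/n)\<close>, \<open>k < n\<close>, is the competitor.\<close>
lemma opt_wdist_powr_le_tail_moment:
  assumes r: "1 \<le> r" and n: "2 \<le> n" and mom: "has_moment r M"
  shows "opt_wdist r n M powr r \<le> 2 powr r * (2 powr r + 1) * tail_moment r M n"
proof -
  define g where "g = clamped_quantile M n"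
  define x where "x k = g (real k / n)" for k :: nat
  let ?q = "quantile_of M"
  let ?stair = "\<lambda>t. \<bar>g t - g (real (nat \<lfloor>t * n\<rfloor>) / n)\<bar> powr r"
  let ?tail = "\<lambda>t. indicator (quantile_tails n) t * \<bar>?q t - ?q (1/2)\<bar> powr r"
  have g: "mono g" "\<And>t. ?q (1/n) \<le> g t" "\<And>t. g t \<le> ?q (1 - 1/n)"
    unfolding g_def using n by (simp_all add: mono_clamped_quantile clamped_quantile_ge clamped_quantile_le)
  have x: "x \<in> Xi n"
    by (auto simp: Xi_def x_def intro!: monoD[OF g(1)] divide_right_mono)
  have stair: "set_integrable lborel {0<..<1} ?stair"
    "(LINT t:{0<..<1}|lborel. ?stair t) \<le> (?q (1 - 1/n) - ?q (1/n)) powr r / n"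
    using set_integral_staircase_error_le[OF g r] n by auto
  have tail: "set_integrable lborel {0<..<1} ?tail"
    using set_integrable_quantile_tail[OF mom _ quantile_tails_subset sets_quantile_tails] r
    by (simp add: set_integral_indicator_subset(2)[OF quantile_tails_subset])
  have "opt_wdist r n M powr r \<le> wdist r (emp_measure n x) M powr r"
    using opt_wdist_le_wdist[OF x] opt_wdist_nonneg r by (intro powr_mono2) auto
  also have "\<dots> = (LINT t:{0<..<1}|lborel. \<bar>quantile_of (emp_measure n x) t - ?q t\<bar> powr r)"
    using r by (simp add: wdist_powr)
  also have "\<dots> \<le> (LINT t:{0<..<1}|lborel. 2 powr r * (?stair t + ?tail t))"
  proof (rule set_integral_mono')
    fix t :: real assume t: "t \<in> {0<..<1}"
    then show "\<bar>quantile_of (emp_measure n x) t - ?q t\<bar> powr r \<le> 2 powr r * (?stair t + ?tail t)"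
      using clamped_staircase_error_powr_le[OF r n t] n x by (simp add: quantile_of_emp_measure x_def g_def)
  qed (auto intro!: stair(1) tail mult_nonneg_nonneg add_nonneg_nonneg)
  also have "\<dots> = 2 powr r * ((LINT t:{0<..<1}|lborel. ?stair t) + tail_moment r M n)"
    using stair(1) tail
    by (simp add: tail_moment_def set_integral_indicator_subset(1)[OF quantile_tails_subset])
  also have "\<dots> \<le> 2 powr r * (2 powr r * tail_moment r M n + tail_moment r M n)"
    using stair(2) quantile_spread_powr_le[OF r n mom] by simp
  finally show ?thesis
    by (simp add: algebra_simps)
qed

lemma opt_wdist_rate_le:
  assumes r: "1 \<le> r" "r < s" and mom: "has_moment r M" "has_moment s M" and n: "2 \<le> n"
  shows "real n powr (1/r - 1/s) * opt_wdist r n M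
    \<le> (3 * 2 powr r * (2 powr r + 1) * (tail_moment s M n + 1/n) powr (r/s)) powr (1/r)"
proof -
  define c where "c = 2 powr r * (2 powr r + 1)"
  have "(1 - r/s) * (1/r) = 1/r - 1/s"
    using r by (simp add: field_simps)
  then have "real n powr (1/r - 1/s) * opt_wdist r n M = (real n powr (1 - r/s)) powr (1/r) * opt_wdist r n M"
    by (simp add: powr_powr)
  also have "\<dots> = (real n powr (1 - r/s) * opt_wdist r n M powr r) powr (1/r)"
    using r opt_wdist_nonneg by (intro powr_inverse_mult_eq) auto
  also have "\<dots> \<le> (c * (real n powr (1 - r/s) * tail_moment r M n)) powr (1/r)"
  proof -
    have "real n powr (1 - r/s) * opt_wdist r n M powr r \<le> real n powr (1 - r/s) * (c * tail_moment r M n)"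
      using opt_wdist_powr_le_tail_moment[OF r(1) n mom(1)] by (intro mult_left_mono) (auto simp: c_def)
    then show ?thesis
      using r by (intro powr_mono2) (auto simp: mult.left_commute)
  qed
  also have "\<dots> \<le> (c * (3 * (tail_moment s M n + 1/n) powr (r/s))) powr (1/r)"
    using tail_moment_powr_le[OF _ r(2) mom n] r tail_moment_nonneg
    by (intro powr_mono2 mult_left_mono) (auto simp: c_def)
  finally show ?thesis
    by (simp add: c_def ac_simps)
qed

lemma opt_wdist_rate_tendsto_0:
  assumes r: "1 \<le> r" "r < s" and mom: "has_moment r M" "has_moment s M"
  shows "(\<lambda>n. real n powr (1/r - 1/s) * opt_wdist r n M) \<longlonglongrightarrow> 0"
proof -
  define c where "c = 3 * 2 powr r * (2 powr r + 1)"
  have "0 \<le> s" using r by simp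
  then have "(\<lambda>n. tail_moment s M n + 1/n) \<longlonglongrightarrow> 0"
    by (rule tendsto_add_zero[OF tail_moment_tendsto_0[OF mom(2)] lim_inverse_n'])
  then have "(\<lambda>n. (tail_moment s M n + 1/n) powr (r/s)) \<longlonglongrightarrow> 0"
    by (rule tendsto_zero_powrI[OF _ tendsto_const]) (use r tail_moment_nonneg in auto)
  then have "(\<lambda>n. c * (tail_moment s M n + 1/n) powr (r/s)) \<longlonglongrightarrow> 0"
    by (rule tendsto_mult_right_zero)
  then have lim: "(\<lambda>n. (c * (tail_moment s M n + 1/n) powr (r/s)) powr (1/r)) \<longlonglongrightarrow> 0"
    by (rule tendsto_zero_powrI[OF _ tendsto_const]) (use r tail_moment_nonneg in \<open>auto simp: c_def\<close>)
  have "\<forall>\<^sub>F n in sequentially. 0 \<le> real n powr (1/r - 1/s) * opt_wdist r n M"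
    by (intro always_eventually allI mult_nonneg_nonneg opt_wdist_nonneg) simp
  moreover have "\<forall>\<^sub>F n in sequentially. real n powr (1/r - 1/s) * opt_wdist r n M
      \<le> (c * (tail_moment s M n + 1/n) powr (r/s)) powr (1/r)"
    unfolding c_def by (rule eventually_sequentiallyI[of 2]) (rule opt_wdist_rate_le[OF r mom])
  ultimately show ?thesis
    by (rule tendsto_sandwich[OF _ _ tendsto_const lim])
qed

lemma opt_wdist_rate_bounded:
  assumes r: "1 \<le> r" and mom: "has_moment r M" and C: "\<And>x. x \<in> supp_of M \<Longrightarrow> \<bar>x\<bar> \<le> C"
    and n: "2 \<le> n"
  shows "real n powr (1/r) * opt_wdist r n M \<le> (2 powr r * (2 powr r + 1) * 2 * (2 * C) powr r) powr (1/r)"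
proof -
  have "real n powr (1/r) * opt_wdist r n M = (n * opt_wdist r n M powr r) powr (1/r)"
    using r opt_wdist_nonneg by (intro powr_inverse_mult_eq) auto
  also have "\<dots> \<le> (n * (2 powr r * (2 powr r + 1) * (2 / n * (2 * C) powr r))) powr (1/r)"
  proof -
    have "tail_moment r M n \<le> 2 / n * (2 * C) powr r"
      using tail_moment_le_bounded_supp[OF C _ mom n] r by simp
    then have "2 powr r * (2 powr r + 1) * tail_moment r M n
        \<le> 2 powr r * (2 powr r + 1) * (2 / n * (2 * C) powr r)"
      by (intro mult_left_mono) auto
    then have "opt_wdist r n M powr r \<le> 2 powr r * (2 powr r + 1) * (2 / n * (2 * C) powr r)"
      by (rule order_trans[OF opt_wdist_powr_le_tail_moment[OF r n mom]])
    then show ?thesis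
      using r by (intro powr_mono2 mult_left_mono) auto
  qed
  also have "\<dots> = (2 powr r * (2 powr r + 1) * 2 * (2 * C) powr r) powr (1/r)"
    using n by (simp add: ac_simps)
  finally show ?thesis .
qed

end

theorem theorem5p8:
  fixes r :: real and M :: "real measure"
  assumes "r \<ge> 1"
    and "prob_space M" and "sets M = sets borel"
    and "has_moment r M"
  shows "(\<forall>s>r. has_moment s M \<longrightarrow>
            ((\<lambda>n. real n powr (1/r - 1/s) * opt_wdist r n M) \<longlonglongrightarrow> 0))
       \<and> (bounded (supp_of M) \<longrightarrow>
            limsup (\<lambda>n. ereal (real n powr (1/r) * opt_wdist r n M)) < \<infinity>)"
proof -
  interpret real_distribution M
    using assms(2,3) by (simp add: real_distribution_def real_distribution_axioms_def)
  show ?thesis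
  proof (intro conjI allI impI)
    fix s assume "s > r" "has_moment s M"
    then show "(\<lambda>n. real n powr (1/r - 1/s) * opt_wdist r n M) \<longlonglongrightarrow> 0"
      using opt_wdist_rate_tendsto_0[OF assms(1) _ assms(4)] by simp
  next
    assume "bounded (supp_of M)"
    then obtain C where C: "\<And>x. x \<in> supp_of M \<Longrightarrow> \<bar>x\<bar> \<le> C"
      by (auto simp: bounded_iff)
    have "limsup (\<lambda>n. ereal (real n powr (1/r) * opt_wdist r n M))
        \<le> ereal ((2 powr r * (2 powr r + 1) * 2 * (2 * C) powr r) powr (1/r))"
      by (intro Limsup_bounded eventually_sequentiallyI[of 2])
        (simp add: opt_wdist_rate_bounded[OF assms(1,4) C])
    then show "limsup (\<lambda>n. ereal (real n powr (1/r) * opt_wdist r n M)) < \<infinity>"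
      by (rule le_less_trans) simp
  qed
qed

end
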